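(* Let $A, B, \alpha, \beta, \gamma, \delta \in \mathbb{R}$ with $A + B \neq 0$. Then the ODE \[ u'''(z) - B\,u(z)\,u''(z) - A\,u'(z)^2 + \alpha\,u''(z) + \beta\,u'(z) + \gamma\,u(z) + \delta = 0 \] has no transcendental entire solutions.
   Context: Transcendental entire means entire on $\mathbb{C}$ and not a polynomial. *)

theory Defs
  imports "HOL-Complex_Analysis.Complex_Analysis" "HOL-Computational_Algebra.Polynomial"
begin

definition transcendental_entire :: "(complex \<Rightarrow> complex) \<Rightarrow> bool" where
  "transcendental_entire u \<longleftrightarrow> u holomorphic_on UNIV \<and> \<not> (\<exists>p. \<forall>z. u z = poly p z)"

end

theory Submission
  imports Defs
begin

text \<open>
  Let \<open>f\<close> be a transcendental entire solution and \<open>M(r)\<close> its maximum modulus. By Hadamard's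
  three circles theorem \<open>\<Phi>(s) = log M(e\<^sup>s)\<close> is convex, and since \<open>f\<close> is not a polynomial,
  \<open>\<Phi>\<close> eventually exceeds every linear function. A Borel-type selection among the points where
  \<open>\<Phi>\<close> takes the values \<open>y\<^sub>0 + kR\<close> yields arbitrarily large radii \<open>r = e\<^sup>s\<close> and integers
  \<open>N \<le> R \<surd>M(r) + 1\<close> with \<open>\<Phi>(s + t) \<le> \<Phi>(s) + N t + 1\<close> for \<open>|t| \<lesssim> R / N\<close>.
  At a point \<open>z\<^sub>0\<close> with \<open>|z\<^sub>0| = r\<close> and \<open>|f z\<^sub>0| = M(r)\<close>, Cauchy's estimates for \<open>f(w) / w\<^sup>N\<close>
  then give the Wiman--Valiron approximations \<open>(deriv ^^ k) f z\<^sub>0 \<approx> (N / z\<^sub>0)\<^sup>k f z\<^sub>0\<close> for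
  \<open>k \<le> 3\<close>. So the quadratic terms \<open>B f f'' + A f'\<^sup>2 \<approx> (A + B) N\<^sup>2 f(z\<^sub>0)\<^sup>2 / z\<^sub>0\<^sup>2\<close> of the
  equation have to be balanced by terms that are at most linear in \<open>f\<close>, which forces
  \<open>|A + B| M(r) \<le> 4N + O(r\<^sup>2)\<close>. With \<open>N = O(\<surd>M(r))\<close> this gives \<open>M(r) = O(r\<^sup>2)\<close> along
  unbounded radii, and Cauchy's inequality makes \<open>f\<close> a polynomial.
\<close>

definition max_modulus :: "(complex \<Rightarrow> complex) \<Rightarrow> real \<Rightarrow> real" where
  "max_modulus f r = (SUP z\<in>sphere 0 r. norm (f z))"

lemma norm_le_max_modulus:
  assumes f: "continuous_on UNIV f" and z: "norm z = r"
  shows "norm (f z) \<le> max_modulus f r"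
proof -
  have "compact ((\<lambda>z. norm (f z)) ` sphere 0 r)"
    using f by (intro compact_continuous_image continuous_intros) (auto intro: continuous_on_subset)
  then have "bdd_above ((\<lambda>z. norm (f z)) ` sphere 0 r)"
    by (meson bounded_imp_bdd_above compact_imp_bounded)
  then show ?thesis
    unfolding max_modulus_def using z by (intro cSUP_upper) auto
qed

lemma max_modulus_attained:
  assumes f: "continuous_on UNIV f" and r: "0 \<le> r"
  obtains z where "norm z = r" "norm (f z) = max_modulus f r"
proof -
  have ne: "sphere (0::complex) r \<noteq> {}"
    using r by simp
  obtain z where z: "z \<in> sphere 0 r" "\<And>y. y \<in> sphere 0 r \<Longrightarrow> norm (f y) \<le> norm (f z)"
    using continuous_attains_sup[OF _ ne, of "\<lambda>z. norm (f z)"] f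
    by (fastforce intro: continuous_intros continuous_on_subset)
  have "max_modulus f r \<le> norm (f z)"
    unfolding max_modulus_def using ne z by (intro cSUP_least) auto
  moreover have "norm (f z) \<le> max_modulus f r"
    using z(1) by (intro norm_le_max_modulus[OF f]) simp
  ultimately show ?thesis
    using that z(1) by simp
qed

lemma norm_le_max_modulus_cball:
  assumes f: "f holomorphic_on UNIV" and z: "norm z \<le> r"
  shows "norm (f z) \<le> max_modulus f r"
proof (rule maximum_modulus_frontier[of f "cball 0 r"])
  show "f holomorphic_on interior (cball 0 r)" "continuous_on (closure (cball 0 r)) f"
    using f holomorphic_on_imp_continuous_on by (auto intro: holomorphic_on_subset continuous_on_subset)
  show "\<And>w. w \<in> frontier (cball 0 r) \<Longrightarrow> norm (f w) \<le> max_modulus f r"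
    using norm_le_max_modulus[OF holomorphic_on_imp_continuous_on[OF f]] frontier_cball by auto
qed (use z in auto)

lemma max_modulus_mono:
  assumes f: "f holomorphic_on UNIV" and r: "0 \<le> r1" "r1 \<le> r2"
  shows "max_modulus f r1 \<le> max_modulus f r2"
proof -
  obtain z where "norm z = r1" "norm (f z) = max_modulus f r1"
    using max_modulus_attained[OF holomorphic_on_imp_continuous_on[OF f] r(1)] .
  then show ?thesis
    using norm_le_max_modulus_cball[OF f, of z r2] r by simp
qed

lemma entire_poly_if_higher_deriv_vanish:
  assumes f: "f holomorphic_on UNIV" and d: "\<And>k. n < k \<Longrightarrow> (deriv ^^ k) f 0 = 0"
  shows "\<exists>p. \<forall>z. f z = poly p z"
proof -
  define c where "c k = (deriv ^^ k) f 0 / fact k" for k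
  have "f z = poly (\<Sum>k\<le>n. monom (c k) k) z" for z
  proof -
    have "(\<lambda>k. (deriv ^^ k) f 0 / fact k * (z - 0) ^ k) sums f z"
      by (rule holomorphic_power_series[where r = "norm z + 1"])
        (use f in \<open>auto intro: holomorphic_on_subset\<close>)
    then have "(\<lambda>k. c k * z ^ k) sums f z"
      by (simp add: c_def)
    moreover have "(\<lambda>k. c k * z ^ k) sums (\<Sum>k\<le>n. c k * z ^ k)"
      by (rule sums_finite) (auto simp: c_def d)
    ultimately show ?thesis
      by (simp add: sums_unique2 poly_sum poly_monom)
  qed
  then show ?thesis by blast
qed

lemma entire_poly_if_max_modulus_growth:
  assumes f: "f holomorphic_on UNIV"
    and growth: "\<And>S. \<exists>r\<ge>S. 0 < r \<and> max_modulus f r \<le> C * r ^ n"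
  shows "\<exists>p. \<forall>z. f z = poly p z"
proof (rule entire_poly_if_higher_deriv_vanish[OF f])
  fix k assume k: "n < k"
  show "(deriv ^^ k) f 0 = 0"
  proof (rule ccontr)
    assume "(deriv ^^ k) f 0 \<noteq> 0"
    then have a: "0 < norm ((deriv ^^ k) f 0)" by simp
    obtain r where "max 1 (fact k * \<bar>C\<bar> / norm ((deriv ^^ k) f 0) + 1) \<le> r"
        and growth_r: "max_modulus f r \<le> C * r ^ n"
      using growth by blast
    then have r: "fact k * \<bar>C\<bar> / norm ((deriv ^^ k) f 0) + 1 \<le> r" "1 \<le> r"
      by (simp_all only: max.bounded_iff)
    have "norm ((deriv ^^ k) f 0) \<le> fact k * (C * r ^ n) / r ^ k"
    proof (rule Cauchy_inequality)
      show "f holomorphic_on ball 0 r" "continuous_on (cball 0 r) f"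
        using f holomorphic_on_imp_continuous_on by (auto intro: holomorphic_on_subset continuous_on_subset)
      show "norm (f x) \<le> C * r ^ n" if "norm (0 - x) = r" for x
        using norm_le_max_modulus[OF holomorphic_on_imp_continuous_on[OF f], of x r] growth_r that by simp
    qed (use r in auto)
    also have "\<dots> = fact k * C / r ^ (k - n)"
      using k r by (simp add: field_simps flip: power_add)
    also have "\<dots> \<le> fact k * \<bar>C\<bar> / r"
      using r k by (intro frac_le mult_left_mono self_le_power) auto
    finally have "norm ((deriv ^^ k) f 0) * r \<le> fact k * \<bar>C\<bar>"
      using r by (simp add: field_simps)
    moreover have "fact k * \<bar>C\<bar> + norm ((deriv ^^ k) f 0) \<le> norm ((deriv ^^ k) f 0) * r"
      using mult_left_mono[OF r(1), of "norm ((deriv ^^ k) f 0)"] a by (simp add: field_simps)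
    ultimately show False
      using a by linarith
  qed
qed

lemma max_modulus_pos:
  assumes f: "f holomorphic_on UNIV" and np: "\<nexists>p. \<forall>z. f z = poly p z" and r: "0 < r"
  shows "0 < max_modulus f r"
proof (rule ccontr)
  assume "\<not> 0 < max_modulus f r"
  then have zero: "f z = 0" if "z \<in> ball 0 r" for z
    using norm_le_max_modulus_cball[OF f, of z r] that
    by (metis mem_ball_0 less_imp_le not_less norm_le_zero_iff order.trans)
  have "(deriv ^^ k) f 0 = 0" if "0 < k" for k
  proof -
    have "(deriv ^^ k) f 0 = (deriv ^^ k) (\<lambda>w. 0) 0"
      by (rule higher_deriv_transform_within_open[of _ "ball 0 r"])
        (use f r zero in \<open>auto intro: holomorphic_on_subset\<close>)
    then show ?thesis
      using that by simp
  qed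
  then show False
    using entire_poly_if_higher_deriv_vanish[OF f, of 0] np by blast
qed

lemma max_modulus_three_circles_power:
  assumes f: "f holomorphic_on UNIV" and r: "0 < r1" "r1 < r" "r < r2"
  shows "max_modulus f r ^ q / r ^ p
    \<le> max (max_modulus f r1 ^ q / r1 ^ p) (max_modulus f r2 ^ q / r2 ^ p)"
    (is "_ \<le> ?rhs")
proof -
  define S where "S = {z::complex. r1 \<le> norm z \<and> norm z \<le> r2}"
  define h where "h w = f w ^ q / w ^ p" for w
  have hol: "h holomorphic_on S"
    using r f unfolding h_def S_def by (auto intro!: holomorphic_intros intro: holomorphic_on_subset)
  then have cont: "continuous_on S h"
    by (rule holomorphic_on_imp_continuous_on)
  have clS: "closed S"
    unfolding S_def by (intro closed_Collect_conj closed_Collect_le continuous_intros)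
  have interior: "{z. r1 < norm z \<and> norm z < r2} \<subseteq> interior S"
    by (rule interior_maximal) (auto simp: S_def intro!: open_Collect_conj open_Collect_less continuous_intros)
  then have frontier: "norm z = r1 \<or> norm z = r2" if "z \<in> frontier S" for z
  proof -
    have "z \<in> S" "z \<notin> interior S"
      using that clS by (auto simp: frontier_def)
    then show ?thesis
      using interior by (force simp: S_def)
  qed
  have norm_h: "norm (h z) = norm (f z) ^ q / norm z ^ p" for z
    by (simp add: h_def norm_divide norm_power)
  obtain \<xi> where \<xi>: "norm \<xi> = r" "norm (f \<xi>) = max_modulus f r"
    using max_modulus_attained[OF holomorphic_on_imp_continuous_on[OF f], of r] r by auto
  have "norm (h \<xi>) \<le> ?rhs"
  proof (rule maximum_modulus_frontier[of h S])
    fix z assume z: "z \<in> frontier S"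
    have "norm (f z) ^ q / norm z ^ p \<le> max_modulus f (norm z) ^ q / norm z ^ p"
      by (intro divide_right_mono power_mono norm_le_max_modulus holomorphic_on_imp_continuous_on[OF f]) auto
    then show "norm (h z) \<le> ?rhs"
      using frontier[OF z] norm_h by auto
  qed (use holomorphic_on_subset[OF hol interior_subset] cont clS \<xi> r in \<open>auto simp: S_def bounded_iff\<close>)
  then show ?thesis
    using \<xi> norm_h by simp
qed

definition log_max_modulus :: "(complex \<Rightarrow> complex) \<Rightarrow> real \<Rightarrow> real" where
  "log_max_modulus f s = ln (max_modulus f (exp s))"

lemma exp_log_max_modulus:
  assumes f: "f holomorphic_on UNIV" and np: "\<nexists>p. \<forall>z. f z = poly p z"
  shows "exp (log_max_modulus f s) = max_modulus f (exp s)"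
  using max_modulus_pos[OF f np] by (simp add: log_max_modulus_def)

lemma mono_log_max_modulus:
  assumes f: "f holomorphic_on UNIV" and np: "\<nexists>p. \<forall>z. f z = poly p z"
  shows "mono (log_max_modulus f)"
  using max_modulus_mono[OF f] max_modulus_pos[OF f np] by (intro monoI) (simp add: log_max_modulus_def)

lemma log_max_modulus_three_circles_nat:
  fixes p q :: nat
  assumes f: "f holomorphic_on UNIV" and np: "\<nexists>p. \<forall>z. f z = poly p z" and s: "s1 < s" "s < s2"
  defines "\<Phi> \<equiv> log_max_modulus f"
  shows "real q * \<Phi> s - real p * s \<le> max (real q * \<Phi> s1 - real p * s1) (real q * \<Phi> s2 - real p * s2)"
proof -
  have e: "max_modulus f (exp t) ^ q / exp t ^ p = exp (q * \<Phi> t - p * t)" for t :: real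
    by (simp add: \<Phi>_def exp_diff exp_of_nat_mult exp_log_max_modulus[OF f np])
  have "exp (q * \<Phi> s - p * s) \<le> max (exp (q * \<Phi> s1 - p * s1)) (exp (q * \<Phi> s2 - p * s2))"
    unfolding e[symmetric] by (rule max_modulus_three_circles_power[OF f]) (use s in auto)
  then show ?thesis
    by (simp add: max_def split: if_splits)
qed

lemma log_max_modulus_minus_linear_le_max:
  assumes f: "f holomorphic_on UNIV" and np: "\<nexists>p. \<forall>z. f z = poly p z"
    and s: "s1 < s" "s < s2" and m: "0 \<le> m"
  defines "\<Phi> \<equiv> log_max_modulus f"
  shows "\<Phi> s - m * s \<le> max (\<Phi> s1 - m * s1) (\<Phi> s2 - m * s2)"
proof (rule field_le_epsilon)
  fix e :: real assume e: "0 < e"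
  define K where "K = \<bar>s\<bar> + \<bar>s1\<bar> + \<bar>s2\<bar>"
  obtain q :: nat where q: "K / e < q"
    using reals_Archimedean2 by blast
  then have q0: "0 < real q"
    using e by (smt (verit) K_def divide_nonneg_pos)
  \<comment> \<open>the three circles bound is only available for the rational slopes \<open>p / q\<close>\<close>
  define p where "p = nat \<lfloor>m * q\<rfloor>"
  have p: "real p \<le> m * q" "m * q < real p + 1"
    using m q0 by (simp_all add: p_def)
  define m' where "m' = real p / q"
  have "m - m' = (m * q - p) / q"
    using q0 by (simp add: m'_def field_simps)
  then have m': "0 \<le> m - m'" "m - m' \<le> 1 / q"
    using p q0 by (simp_all add: divide_le_cancel)
  have "(q * \<Phi> s - p * s) / q \<le> max (q * \<Phi> s1 - p * s1) (q * \<Phi> s2 - p * s2) / q"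
    using log_max_modulus_three_circles_nat[OF f np s, of q p] q0 by (simp add: \<Phi>_def divide_right_mono)
  then have approx: "\<Phi> s - m' * s \<le> max (\<Phi> s1 - m' * s1) (\<Phi> s2 - m' * s2)"
    using q0 by (simp add: m'_def field_simps max_divide_distrib_right)
  have err: "\<bar>(m - m') * t\<bar> \<le> \<bar>t\<bar> / q" for t
    using mult_right_mono[OF m'(2) abs_ge_zero[of t]] m'(1) by (simp add: abs_mult)
  have "K / q < e"
    using q q0 e by (simp add: field_simps)
  moreover have "K / q = \<bar>s\<bar> / q + \<bar>s1\<bar> / q + \<bar>s2\<bar> / q"
    by (simp add: K_def add_divide_distrib)
  ultimately show "\<Phi> s - m * s \<le> max (\<Phi> s1 - m * s1) (\<Phi> s2 - m * s2) + e"
    using approx err[of s] err[of s1] err[of s2] by (auto simp: abs_le_iff max_def left_diff_distrib split: if_splits)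
qed

lemma convex_log_max_modulus:
  assumes f: "f holomorphic_on UNIV" and np: "\<nexists>p. \<forall>z. f z = poly p z"
  shows "convex_on UNIV (log_max_modulus f)"
proof (rule convex_on_linorderI)
  fix t x y :: real assume t: "0 < t" "t < 1" and xy: "x < y"
  define \<Phi> where "\<Phi> = log_max_modulus f"
  define s where "s = (1 - t) * x + t * y"
  define m where "m = (\<Phi> y - \<Phi> x) / (y - x)"
  have s: "x < s" "s < y"
    using mult_strict_left_mono[OF xy, of t] mult_strict_left_mono[OF xy, of "1 - t"] t
    by (simp_all add: s_def algebra_simps)
  have "0 \<le> m"
    using mono_log_max_modulus[OF f np] xy by (simp add: m_def \<Phi>_def monoD)
  then have "\<Phi> s - m * s \<le> max (\<Phi> x - m * x) (\<Phi> y - m * y)"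
    using log_max_modulus_minus_linear_le_max[OF f np s] by (simp add: \<Phi>_def)
  moreover have "\<Phi> y - m * y = \<Phi> x - m * x"
    using xy by (simp add: m_def field_simps)
  moreover have "\<Phi> x + m * (s - x) = (1 - t) * \<Phi> x + t * \<Phi> y"
    using xy by (simp add: m_def s_def field_simps)
  ultimately show "\<Phi> ((1 - t) *\<^sub>R x + t *\<^sub>R y) \<le> (1 - t) * \<Phi> x + t * \<Phi> y"
    by (simp add: s_def algebra_simps)
qed simp

lemma log_max_modulus_superlinear:
  assumes f: "f holomorphic_on UNIV" and np: "\<nexists>p. \<forall>z. f z = poly p z"
  shows "\<exists>S. \<forall>s\<ge>S. C + R * s < log_max_modulus f s"
proof (rule ccontr)
  assume "\<not> ?thesis"
  then have small: "\<exists>s\<ge>S. log_max_modulus f s \<le> C + R * s" for S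
    by (meson not_le)
  define k where "k = nat \<lceil>R\<rceil>"
  have "max_modulus f (exp s) \<le> exp C * exp s ^ k" if "0 \<le> s" "log_max_modulus f s \<le> C + R * s" for s
  proof -
    have "log_max_modulus f s \<le> C + k * s"
      using that mult_right_mono[of R k s] by (simp add: k_def) linarith
    then show ?thesis
      by (simp flip: exp_log_max_modulus[OF f np] exp_of_nat_mult exp_add)
  qed
  then have "\<exists>r\<ge>S. 0 < r \<and> max_modulus f r \<le> exp C * r ^ k" for S
    using small[of "max S 0"] exp_ge_add_one_self by (smt (verit) exp_gt_zero)
  then show False
    using entire_poly_if_max_modulus_growth[OF f] np by blast
qed

lemma not_summable_regular_index:
  fixes g :: "nat \<Rightarrow> real"
  assumes pos: "\<And>k. 0 < g k" and dec: "\<And>k. g (Suc k) \<le> g k"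
    and diverges: "\<not> summable g" and q: "1 < q"
  shows "\<exists>k\<ge>K. g k / q \<le> g (Suc k) \<and> (1/2) ^ k \<le> g k"
proof (rule ccontr)
  assume "\<not> ?thesis"
  then have bad: "g (Suc k) < g k / q \<or> g k < (1/2) ^ k" if "K \<le> k" for k
    using that by force
  define \<mu> where "\<mu> = max (1 / q) (1 / 2)"
  have \<mu>: "0 < \<mu>" "\<mu> < 1" "1 / q \<le> \<mu>" "1 / 2 \<le> \<mu>"
    using q by (auto simp: \<mu>_def)
  define E where "E = max (1 / \<mu>) (g K / \<mu> ^ K)"
  have E: "1 \<le> E * \<mu>" "g K \<le> E * \<mu> ^ K" "0 \<le> E"
    using \<mu> pos[of K] by (auto simp: E_def field_simps max_def)
  have geometric: "g k \<le> E * \<mu> ^ k" if "K \<le> k" for k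
    using that
  proof (induction k rule: dec_induct)
    case (step k)
    from bad[OF step(1)] show ?case
    proof
      assume "g (Suc k) < g k / q"
      also have "\<dots> \<le> E * \<mu> ^ k * (1 / q)"
        using step.IH q by (simp add: divide_right_mono)
      also have "\<dots> \<le> E * \<mu> ^ k * \<mu>"
        using \<mu> E by (intro mult_left_mono) auto
      finally show ?thesis
        by (simp add: algebra_simps)
    next
      assume "g k < (1/2) ^ k"
      also have "\<dots> \<le> \<mu> ^ k"
        using \<mu> by (intro power_mono) auto
      also have "\<dots> \<le> E * \<mu> * \<mu> ^ k"
        using E \<mu> by simp
      finally show ?thesis
        using dec[of k] by (simp add: algebra_simps)
    qed
  qed (use E in simp)
  have "summable (\<lambda>k. E * \<mu> ^ k)"
    using \<mu> by (intro summable_mult summable_geometric) simp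
  then have "summable g"
    by (rule summable_comparison_test'[of _ K]) (use geometric pos in \<open>simp add: less_imp_le\<close>)
  with diverges show False ..
qed

lemma convex_on_le_chord:
  fixes \<Phi> :: "real \<Rightarrow> real"
  assumes "convex_on UNIV \<Phi>" "a < b" "a \<le> c" "c \<le> b"
  shows "\<Phi> c \<le> \<Phi> a + (\<Phi> b - \<Phi> a) / (b - a) * (c - a)"
  using convex_onD_Icc'[OF convex_on_subset[OF assms(1)], of a b c] assms by simp

lemma convex_superlinear_levels:
  fixes \<Phi> :: "real \<Rightarrow> real" and R y0 :: real
  assumes convex: "convex_on UNIV \<Phi>" and R: "0 \<le> R" and y0: "\<Phi> 0 \<le> y0"
    and superlinear: "\<And>C. \<exists>S. \<forall>s\<ge>S. C + R * s < \<Phi> s"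
  obtains s :: "nat \<Rightarrow> real" where "\<And>k. \<Phi> (s k) = y0 + k * R"
proof -
  have "\<exists>t. \<Phi> t = y0 + k * R" for k :: nat
  proof -
    obtain S where S: "\<forall>t\<ge>S. y0 + k * R + R * t < \<Phi> t"
      using superlinear by blast
    have "0 \<le> R * max S 0"
      using R by simp
    then have "y0 + k * R \<le> \<Phi> (max S 0)"
      using S[rule_format, of "max S 0"] by simp
    moreover have "0 \<le> real k * R"
      using R by simp
    then have "\<Phi> 0 \<le> y0 + k * R"
      using y0 by linarith
    moreover have "continuous_on {0..max S 0} \<Phi>"
      using convex_on_continuous[OF open_UNIV convex] by (rule continuous_on_subset) simp
    ultimately show ?thesis
      using IVT'[of \<Phi> 0 "y0 + k * R" "max S 0"] by auto
  qed
  then show ?thesis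
    using that choice[of "\<lambda>k t. \<Phi> t = y0 + real k * R"] by blast
qed

context
  fixes \<Phi> :: "real \<Rightarrow> real" and R y0 :: real and s :: "nat \<Rightarrow> real"
  assumes convex: "convex_on UNIV \<Phi>" and mono: "mono \<Phi>" and R: "0 < R"
    and level: "\<And>k. \<Phi> (s k) = y0 + k * R"
begin

lemma level_points_increasing: "s k < s (Suc k)"
proof (rule ccontr)
  assume "\<not> s k < s (Suc k)"
  then have "\<Phi> (s (Suc k)) \<le> \<Phi> (s k)"
    using mono by (simp add: monoD)
  then show False
    using R by (simp add: level algebra_simps)
qed

lemma level_gaps_decreasing: "s (Suc (Suc k)) - s (Suc k) \<le> s (Suc k) - s k"
proof -
  define a b c where "a = s k" and "b = s (Suc k)" and "c = s (Suc (Suc k))"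
  have abc: "a < b" "b < c"
    using level_points_increasing[of k] level_points_increasing[of "Suc k"] by (simp_all add: a_def b_def c_def)
  have "\<Phi> b \<le> \<Phi> a + (\<Phi> c - \<Phi> a) / (c - a) * (b - a)"
    using abc by (intro convex_on_le_chord[OF convex]) auto
  moreover have "\<Phi> b = \<Phi> a + R" "\<Phi> c = \<Phi> a + 2 * R"
    by (simp_all add: a_def b_def c_def level algebra_simps)
  ultimately have "R \<le> 2 * R * (b - a) / (c - a)"
    by simp
  then have "R * (c - a) \<le> R * (2 * (b - a))"
    using abc by (simp add: le_divide_eq mult.assoc mult.left_commute)
  then have "c - a \<le> 2 * (b - a)"
    using R by (simp only: mult_le_cancel_left_pos)
  then show ?thesis
    by (simp add: a_def b_def c_def)
qed

lemma level_points_unbounded: "\<exists>k. S < s k"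
proof (rule ccontr)
  assume "\<not> ?thesis"
  then have bounded: "\<Phi> (s k) \<le> \<Phi> S" for k
    using mono by (simp add: monoD not_less)
  obtain k :: nat where "(\<Phi> S - y0) / R < k"
    using reals_Archimedean2 by blast
  then have "\<Phi> S - y0 < k * R"
    using R by (simp add: pos_divide_less_eq)
  then show False
    using bounded[of k] level[of k] by simp
qed

lemma level_gaps_not_summable: "\<not> summable (\<lambda>k. s (Suc k) - s k)"
proof
  assume "summable (\<lambda>k. s (Suc k) - s k)"
  then have partial: "(\<Sum>j<k. s (Suc j) - s j) \<le> (\<Sum>j. s (Suc j) - s j)" for k
    using level_points_increasing by (intro sum_le_suminf) (auto simp: less_imp_le)
  have "s k \<le> s 0 + (\<Sum>j. s (Suc j) - s j)" for k
    using partial[of k] sum_lessThan_telescope[of s k] by linarith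
  then show False
    using level_points_unbounded by (meson not_less)
qed

lemma level_gap_le_one:
  assumes superlinear: "\<And>C. \<exists>S. \<forall>x\<ge>S. C + R * x < \<Phi> x"
  shows "\<exists>k\<ge>K. s (Suc k) - s k \<le> 1"
proof (rule ccontr)
  assume "\<not> ?thesis"
  then have big: "1 < s (Suc k) - s k" if "K \<le> k" for k
    using that by force
  have grow: "s K + m \<le> s (K + m)" for m
  proof (induction m)
    case (Suc m)
    then show ?case
      using big[of "K + m"] by simp
  qed simp
  obtain S where S: "\<forall>t\<ge>S. y0 + K * R - R * s K + R * t < \<Phi> t"
    using superlinear by blast
  obtain m :: nat where m: "S - s K \<le> m"
    using real_arch_simple by blast
  have "R * m \<le> R * (s (K + m) - s K)"
    using grow[of m] R by (intro mult_left_mono) auto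
  moreover have "S \<le> s (K + m)"
    using grow[of m] m by linarith
  ultimately have "\<Phi> (s (K + m)) < \<Phi> (s (K + m))"
    using S level[of "K + m"] by (auto simp: algebra_simps)
  then show False
    by simp
qed

lemma level_regular_index:
  assumes superlinear: "\<And>C. \<exists>S. \<forall>x\<ge>S. C + R * x < \<Phi> x" and q: "1 < q"
  shows "\<exists>k. S \<le> s (Suc k) \<and> s (Suc k) - s k \<le> 1
    \<and> (s (Suc k) - s k) / q \<le> s (Suc (Suc k)) - s (Suc k) \<and> (1/2) ^ k \<le> s (Suc k) - s k"
proof -
  define g where "g = (\<lambda>k. s (Suc k) - s k)"
  have g_dec: "g (Suc k) \<le> g k" for k
    using level_gaps_decreasing by (simp add: g_def)
  obtain K where K: "S < s K"
    using level_points_unbounded by blast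
  obtain k1 where k1: "K \<le> k1" "g k1 \<le> 1"
    using level_gap_le_one[OF superlinear, of K] unfolding g_def by blast
  obtain k where k: "k1 \<le> k" "g k / q \<le> g (Suc k)" "(1/2) ^ k \<le> g k"
    using not_summable_regular_index[of g, OF _ g_dec _ q, of k1] level_points_increasing
      level_gaps_not_summable unfolding g_def by force
  have "g k \<le> g k1"
    using k(1)
  proof (induction k rule: dec_induct)
    case (step j)
    then show ?case
      using g_dec[of j] by linarith
  qed simp
  moreover have "incseq s"
    using level_points_increasing by (intro incseq_SucI) (simp add: less_imp_le)
  then have "s K \<le> s (Suc k)"
    using k(1) k1(1) by (simp add: incseq_def)
  ultimately show ?thesis
    using K k k1 unfolding g_def by (intro exI[of _ k]) auto
qed

lemma level_chord_left:
  assumes "- (s (Suc k) - s k) \<le> t" "t \<le> 0"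
  shows "\<Phi> (s (Suc k) + t) \<le> \<Phi> (s (Suc k)) + R / (s (Suc k) - s k) * t"
proof -
  have "\<Phi> (s (Suc k) + t) \<le> \<Phi> (s k) + (\<Phi> (s (Suc k)) - \<Phi> (s k)) / (s (Suc k) - s k) * (s (Suc k) + t - s k)"
    using convex_on_le_chord[OF convex, of "s k" "s (Suc k)" "s (Suc k) + t"] assms level_points_increasing[of k]
    by simp
  also have "\<dots> = \<Phi> (s (Suc k)) + R / (s (Suc k) - s k) * t"
    using level_points_increasing[of k] by (simp add: level field_simps)
  finally show ?thesis .
qed

lemma level_chord_right:
  assumes "0 \<le> t" "t \<le> s (Suc (Suc k)) - s (Suc k)"
  shows "\<Phi> (s (Suc k) + t) \<le> \<Phi> (s (Suc k)) + R / (s (Suc (Suc k)) - s (Suc k)) * t"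
  using convex_on_le_chord[OF convex, of "s (Suc k)" "s (Suc (Suc k))" "s (Suc k) + t"] assms
    level_points_increasing[of "Suc k"]
  by (simp add: level algebra_simps)

lemma level_gap_inverse_le_exp:
  assumes R: "2 \<le> R" and y0: "1 \<le> y0" and gap: "(1/2) ^ k \<le> s (Suc k) - s k"
  shows "1 / (s (Suc k) - s k) \<le> exp (\<Phi> (s (Suc k)) / 2)"
proof -
  have "1 / (s (Suc k) - s k) \<le> 2 ^ k"
    using gap level_points_increasing[of k] by (simp add: field_simps power_divide)
  also have "\<dots> \<le> exp 1 ^ k"
    using exp_ge_add_one_self[of 1] by (intro power_mono) auto
  also have "\<dots> = exp (real k)"
    using exp_of_nat_mult[of k "1::real"] by simp
  also have "\<dots> \<le> exp (\<Phi> (s (Suc k)) / 2)"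
  proof -
    have "2 * real (Suc k) \<le> real (Suc k) * R"
      using mult_right_mono[OF R, of "real (Suc k)"] by (simp add: mult.commute)
    then show ?thesis
      using level[of "Suc k"] y0 by simp
  qed
  finally show ?thesis .
qed

end

lemma convex_superlinear_regular_point:
  fixes \<Phi> :: "real \<Rightarrow> real" and R q S :: real
  assumes convex: "convex_on UNIV \<Phi>" and mono: "mono \<Phi>" and R: "2 \<le> R" and q: "1 < q"
    and superlinear: "\<And>C. \<exists>S. \<forall>s\<ge>S. C + R * s < \<Phi> s"
  obtains s0 g where "S \<le> s0" "0 < g" "g \<le> 1" "0 \<le> \<Phi> s0" "1 / g \<le> exp (\<Phi> s0 / 2)"
    "\<And>t. - g \<le> t \<Longrightarrow> t \<le> 0 \<Longrightarrow> \<Phi> (s0 + t) \<le> \<Phi> s0 + R / g * t"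
    "\<And>t. 0 \<le> t \<Longrightarrow> t \<le> g / q \<Longrightarrow> \<Phi> (s0 + t) \<le> \<Phi> s0 + q * R / g * t"
proof -
  define y0 where "y0 = max 0 (\<Phi> 0) + 1"
  have y0: "1 \<le> y0" "\<Phi> 0 \<le> y0"
    by (simp_all add: y0_def)
  have R0: "0 < R"
    using R by simp
  obtain s :: "nat \<Rightarrow> real" where level: "\<And>k. \<Phi> (s k) = y0 + k * R"
    using convex_superlinear_levels[OF convex less_imp_le[OF R0] y0(2) superlinear] by blast
  note levels = convex mono R0 level
  obtain k where k: "S \<le> s (Suc k)" "s (Suc k) - s k \<le> 1"
    "(s (Suc k) - s k) / q \<le> s (Suc (Suc k)) - s (Suc k)" "(1/2) ^ k \<le> s (Suc k) - s k"
    using level_regular_index[OF levels superlinear q] by blast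
  define g where "g = s (Suc k) - s k"
  have g: "0 < g" "0 < s (Suc (Suc k)) - s (Suc k)"
    using level_points_increasing[OF levels] by (simp_all add: g_def)
  have "1 / g \<le> exp (\<Phi> (s (Suc k)) / 2)"
    using level_gap_inverse_le_exp[OF levels R y0(1) k(4)] by (simp add: g_def)
  moreover have "\<Phi> (s (Suc k) + t) \<le> \<Phi> (s (Suc k)) + q * R / g * t" if "0 \<le> t" "t \<le> g / q" for t
  proof -
    have "\<Phi> (s (Suc k) + t) \<le> \<Phi> (s (Suc k)) + R / (s (Suc (Suc k)) - s (Suc k)) * t"
      using level_chord_right[OF levels, of t k] that k(3) by (simp add: g_def)
    also have "R / (s (Suc (Suc k)) - s (Suc k)) * t \<le> q * R / g * t"
    proof -
      have "1 / (s (Suc (Suc k)) - s (Suc k)) \<le> q / g"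
        using k(3) g q by (simp add: g_def field_simps)
      then have "R * (1 / (s (Suc (Suc k)) - s (Suc k))) \<le> R * (q / g)"
        using R by (intro mult_left_mono) auto
      then show ?thesis
        using that by (intro mult_right_mono) (auto simp: mult.commute)
    qed
    finally show ?thesis
      by simp
  qed
  moreover have "0 \<le> \<Phi> (s (Suc k))"
    using level y0 R by simp
  ultimately show ?thesis
    using that[of "s (Suc k)" g] level_chord_left[OF levels, of k] k g by (simp add: g_def)
qed

lemma convex_superlinear_integer_slope_point:
  fixes \<Phi> :: "real \<Rightarrow> real" and R S :: real
  assumes convex: "convex_on UNIV \<Phi>" and mono: "mono \<Phi>" and R: "2 \<le> R"
    and superlinear: "\<And>C. \<exists>S. \<forall>s\<ge>S. C + R * s < \<Phi> s"
  obtains s0 \<rho> :: real and N :: nat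
  where "S \<le> s0" "0 \<le> \<Phi> s0" "0 < \<rho>" "\<rho> \<le> 1 / 2" "R \<le> 2 * real N * \<rho>"
    "real N \<le> R * exp (\<Phi> s0 / 2) + 1"
    "\<And>t. - 2 * \<rho> \<le> t \<Longrightarrow> t \<le> \<rho> \<Longrightarrow> \<Phi> (s0 + t) \<le> \<Phi> s0 + real N * t + 1"
proof -
  \<comment> \<open>the excess slope \<open>(q - 1) R / g = 2 / g\<close> on the right then costs at most 1 on \<open>[0, g / 2]\<close>\<close>
  define q where "q = 1 + 2 / R"
  have q: "1 < q" "q \<le> 2"
    using R by (auto simp: q_def field_simps)
  obtain s0 g where sel: "S \<le> s0" "0 < g" "g \<le> 1" "0 \<le> \<Phi> s0" "1 / g \<le> exp (\<Phi> s0 / 2)"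
    and left: "\<And>t. - g \<le> t \<Longrightarrow> t \<le> 0 \<Longrightarrow> \<Phi> (s0 + t) \<le> \<Phi> s0 + R / g * t"
    and right: "\<And>t. 0 \<le> t \<Longrightarrow> t \<le> g / q \<Longrightarrow> \<Phi> (s0 + t) \<le> \<Phi> s0 + q * R / g * t"
    using convex_superlinear_regular_point[OF convex mono R q(1) superlinear] by blast
  define N where "N = nat \<lceil>R / g\<rceil>"
  have N: "R / g \<le> N" "N < R / g + 1"
    using R sel(2) by (simp_all add: N_def) linarith+
  have near: "\<Phi> (s0 + t) \<le> \<Phi> s0 + N * t + 1" if t: "- 2 * (g / 2) \<le> t" "t \<le> g / 2" for t :: real
  proof (cases "t \<le> 0")
    case True
    have "(N - R / g) * (- t) \<le> 1 * 1"
      using N True t sel(3) by (intro mult_mono) auto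
    moreover have "\<Phi> (s0 + t) \<le> \<Phi> s0 + R / g * t"
      using left[of t] t(1) True by simp
    ultimately show ?thesis
      by (simp add: left_diff_distrib)
  next
    case False
    have "g / 2 \<le> g / q"
      using q sel(2) by (intro divide_left_mono) auto
    then have "\<Phi> (s0 + t) \<le> \<Phi> s0 + q * R / g * t"
      using right[of t] False t(2) by linarith
    moreover have "q * R / g * t = R / g * t + 2 / g * t"
      using R sel(2) by (simp add: q_def field_simps)
    moreover have "2 / g * t \<le> 1"
      using t(2) sel(2) by (simp add: field_simps)
    moreover have "R / g * t \<le> N * t"
      using N(1) False by (intro mult_right_mono) auto
    ultimately show ?thesis
      by linarith
  qed
  have rho: "0 < g / 2" "g / 2 \<le> 1 / 2"
    using sel by auto
  have slope: "R \<le> 2 * real N * (g / 2)"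
    using N(1) sel(2) by (simp add: field_simps)
  have "N \<le> R * exp (\<Phi> s0 / 2) + 1"
    using N sel(5) R mult_left_mono[OF sel(5), of R] by simp
  from that[OF sel(1,4) rho slope this near] show ?thesis .
qed

lemma norm_over_power_le_near_max_point:
  fixes f :: "complex \<Rightarrow> complex" and N :: nat
  assumes f: "continuous_on UNIV f" and z0: "norm z0 = r" and r: "0 < r"
    and \<rho>: "0 < \<rho>" "\<rho> \<le> 1 / 2"
    and growth: "\<And>t. - 2 * \<rho> \<le> t \<Longrightarrow> t \<le> \<rho> \<Longrightarrow>
      max_modulus f (r * exp t) \<le> exp 1 * max_modulus f r * exp t ^ N"
    and x: "norm (x - z0) = r * \<rho>"
  shows "norm (f x) / norm x ^ N \<le> 3 * max_modulus f r / r ^ N"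
proof -
  have x_bounds: "r * (1 - \<rho>) \<le> norm x" "norm x \<le> r * (1 + \<rho>)"
    using norm_triangle_ineq2[of x z0] norm_triangle_ineq3[of x z0] x z0 by (simp_all add: algebra_simps)
  moreover have "0 < r * (1 - \<rho>)"
    using r \<rho> by simp
  ultimately have x0: "0 < norm x"
    by linarith
  define t where "t = ln (norm x / r)"
  have x_eq: "norm x = r * exp t"
    using x0 r by (simp add: t_def)
  have "\<rho> * \<rho> \<le> 1 / 2 * \<rho>"
    using \<rho> by (intro mult_right_mono) auto
  moreover have "- \<rho> - 2 * \<rho>\<^sup>2 \<le> ln (1 - \<rho>)"
    using \<rho> by (intro ln_one_minus_pos_lower_bound) auto
  ultimately have "- 2 * \<rho> \<le> ln (1 - \<rho>)"
    unfolding power2_eq_square by linarith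
  also have "\<dots> \<le> t"
    using x_bounds r \<rho> x0 unfolding t_def by (subst ln_le_cancel_iff) (auto simp: pos_le_divide_eq mult.commute)
  finally have t_lower: "- 2 * \<rho> \<le> t" .
  have "t \<le> ln (1 + \<rho>)"
    using x_bounds r x0 \<rho> unfolding t_def by (subst ln_le_cancel_iff) (auto simp: pos_divide_le_eq mult.commute)
  also have "\<dots> \<le> \<rho>"
    using \<rho> by (intro ln_add_one_self_le_self) auto
  finally have t_upper: "t \<le> \<rho>" .
  have "norm (f x) \<le> exp 1 * max_modulus f r * exp t ^ N"
    using norm_le_max_modulus[OF f refl, of x] growth[OF t_lower t_upper] x_eq by simp
  then have "norm (f x) / norm x ^ N \<le> exp 1 * max_modulus f r / r ^ N"
    using x0 r by (simp add: x_eq field_simps power_mult_distrib)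
  also have "\<dots> \<le> 3 * max_modulus f r / r ^ N"
    using exp_le norm_le_max_modulus[OF f z0] r
    by (intro divide_right_mono mult_right_mono) (auto intro: order.trans[OF norm_ge_zero])
  finally show ?thesis .
qed

lemma higher_derivs_power_mult:
  fixes f :: "complex \<Rightarrow> complex" and m :: nat
  assumes f: "f holomorphic_on UNIV" and z0: "z0 \<noteq> 0"
  defines "H \<equiv> \<lambda>w. f w / w ^ (m + 3)"
  shows "deriv f z0 = of_nat (m + 3) * z0 ^ (m + 2) * H z0 + z0 ^ (m + 3) * deriv H z0"
    and "(deriv ^^ 2) f z0 = of_nat (m + 3) * of_nat (m + 2) * z0 ^ (m + 1) * H z0
           + 2 * of_nat (m + 3) * z0 ^ (m + 2) * deriv H z0 + z0 ^ (m + 3) * (deriv ^^ 2) H z0"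
    and "(deriv ^^ 3) f z0 = of_nat (m + 3) * of_nat (m + 2) * of_nat (m + 1) * z0 ^ m * H z0
           + 3 * of_nat (m + 3) * of_nat (m + 2) * z0 ^ (m + 1) * deriv H z0
           + 3 * of_nat (m + 3) * z0 ^ (m + 2) * (deriv ^^ 2) H z0 + z0 ^ (m + 3) * (deriv ^^ 3) H z0"
proof -
  have holH: "H holomorphic_on - {0}"
    unfolding H_def using f by (intro holomorphic_intros) (auto intro: holomorphic_on_subset)
  have leibniz: "(deriv ^^ k) f z0
      = (\<Sum>i = 0..k. of_nat (k choose i) * (deriv ^^ i) (\<lambda>w. w ^ (m + 3)) z0 * (deriv ^^ (k - i)) H z0)" for k
  proof -
    have "(\<lambda>w. w ^ (m + 3) * H w) holomorphic_on - {0}"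
      using holH by (intro holomorphic_intros)
    then have "(deriv ^^ k) f z0 = (deriv ^^ k) (\<lambda>w. w ^ (m + 3) * H w) z0"
      using f z0 by (intro higher_deriv_transform_within_open[of _ "- {0}"])
        (auto intro: holomorphic_on_subset simp: H_def)
    also have "\<dots> = (\<Sum>i = 0..k. of_nat (k choose i) * (deriv ^^ i) (\<lambda>w. w ^ (m + 3)) z0 * (deriv ^^ (k - i)) H z0)"
      using holH z0 by (intro higher_deriv_mult) (auto intro: holomorphic_intros)
    finally show ?thesis .
  qed
  have power: "(deriv ^^ j) (\<lambda>w. w ^ N) z0 = pochhammer (of_nat (Suc N - j)) j * z0 ^ (N - j)" for j N
    using higher_deriv_power[of j 0 N z0] by simp
  have sum3: "(\<Sum>i = 0..3. F i) = F 0 + F 1 + F 2 + F (3::nat)" for F :: "nat \<Rightarrow> complex"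
    by (simp add: numeral_3_eq_3 numeral_2_eq_2 sum.atLeast0_atMost_Suc)
  show "deriv f z0 = of_nat (m + 3) * z0 ^ (m + 2) * H z0 + z0 ^ (m + 3) * deriv H z0"
    using leibniz[of 1] by (simp add: power)
  show "(deriv ^^ 2) f z0 = of_nat (m + 3) * of_nat (m + 2) * z0 ^ (m + 1) * H z0
           + 2 * of_nat (m + 3) * z0 ^ (m + 2) * deriv H z0 + z0 ^ (m + 3) * (deriv ^^ 2) H z0"
    using leibniz[of 2] by (simp add: power numeral_2_eq_2 pochhammer_Suc algebra_simps)
  show "(deriv ^^ 3) f z0 = of_nat (m + 3) * of_nat (m + 2) * of_nat (m + 1) * z0 ^ m * H z0
           + 3 * of_nat (m + 3) * of_nat (m + 2) * z0 ^ (m + 1) * deriv H z0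
           + 3 * of_nat (m + 3) * z0 ^ (m + 2) * (deriv ^^ 2) H z0 + z0 ^ (m + 3) * (deriv ^^ 3) H z0"
    unfolding leibniz sum3 power
    by (simp add: numeral_3_eq_3 numeral_2_eq_2 pochhammer_Suc algebra_simps)
qed

lemma norm_higher_deriv_power_quotient_le:
  fixes f :: "complex \<Rightarrow> complex" and N :: nat
  assumes f: "f holomorphic_on UNIV" and z0: "norm z0 = r" and r: "0 < r"
    and \<rho>: "0 < \<rho>" "\<rho> \<le> 1 / 2" and f0: "f z0 \<noteq> 0"
    and bound: "\<And>x. norm (x - z0) = r * \<rho> \<Longrightarrow> norm (f x) / norm x ^ N \<le> 3 * norm (f z0) / r ^ N"
  defines "H \<equiv> \<lambda>w. f w / w ^ N"
  shows "norm (z0 ^ j * (deriv ^^ j) H z0 / H z0) \<le> 3 * fact j / \<rho> ^ j"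
proof -
  have "r * \<rho> < r"
    using r \<rho> by simp
  then have ball: "cball z0 (r * \<rho>) \<subseteq> - {0}"
    using z0 norm_triangle_ineq2[of z0 0] by (auto simp: dist_norm)
  have holH: "H holomorphic_on - {0}"
    unfolding H_def using f by (intro holomorphic_intros) (auto intro: holomorphic_on_subset)
  have H0: "norm (H z0) = norm (f z0) / r ^ N"
    using z0 by (simp add: H_def norm_divide norm_power)
  have H0_nonzero: "H z0 \<noteq> 0"
    using f0 z0 r by (auto simp: H_def)
  have cauchy: "norm ((deriv ^^ j) H z0) \<le> fact j * (3 * norm (H z0)) / (r * \<rho>) ^ j"
  proof (rule Cauchy_inequality)
    show "H holomorphic_on ball z0 (r * \<rho>)" "continuous_on (cball z0 (r * \<rho>)) H"
      using holH holomorphic_on_imp_continuous_on[OF holH] ball ball_subset_cball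
      by (blast intro: holomorphic_on_subset continuous_on_subset)+
    show "norm (H x) \<le> 3 * norm (H z0)" if "norm (z0 - x) = r * \<rho>" for x
      using bound[of x] that H0 z0 by (simp add: H_def norm_divide norm_power norm_minus_commute)
  qed (use r \<rho> in auto)
  have "norm (z0 ^ j * (deriv ^^ j) H z0 / H z0) = r ^ j * norm ((deriv ^^ j) H z0) / norm (H z0)"
    using z0 by (simp add: norm_mult norm_divide norm_power)
  also have "\<dots> \<le> r ^ j * (fact j * (3 * norm (H z0)) / (r * \<rho>) ^ j) / norm (H z0)"
    using cauchy r by (intro divide_right_mono mult_left_mono) auto
  also have "\<dots> = 3 * fact j / \<rho> ^ j"
    using H0_nonzero r \<rho> by (simp add: field_simps power_mult_distrib)
  finally show ?thesis .
qed

lemma norm_add3_le: "norm (a + b + c) \<le> norm a + norm b + norm c"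
  for a b c :: "'a::real_normed_vector"
  by (meson add_right_mono norm_triangle_ineq order.trans)

lemma norm_perturbed_falling_factorials_le:
  fixes n u :: real and e1 e2 e3 :: complex
  assumes n: "2 \<le> n" and u: "0 \<le> u" "100 * u \<le> n"
    and e: "norm e1 \<le> 6 * u" "norm e2 \<le> 24 * u\<^sup>2" "norm e3 \<le> 144 * u ^ 3"
  shows "norm (of_real n + e1) \<le> 2 * n"
    and "norm (of_real (n * (n - 1)) + 2 * of_real n * e1 + e2) \<le> 2 * n\<^sup>2"
    and "norm (of_real (n * (n - 1) * (n - 2)) + 3 * of_real (n * (n - 1)) * e1 + 3 * of_real n * e2 + e3)
      \<le> 2 * n ^ 3"
proof -
  have nu: "n * u \<le> n\<^sup>2 / 100" "u\<^sup>2 \<le> n\<^sup>2 / 10000"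
    using mult_left_mono[OF u(2), of n] mult_mono[OF u(2) u(2)] n u by (simp_all add: power2_eq_square)
  have nnu: "n\<^sup>2 * u \<le> n ^ 3 / 100" "n * u\<^sup>2 \<le> n ^ 3 / 10000" "u ^ 3 \<le> n ^ 3 / 1000000"
    using mult_left_mono[OF nu(1), of n] mult_left_mono[OF nu(2), of n] mult_mono[OF nu(2) u(2)] n u
    by (simp_all add: power2_eq_square power3_eq_cube algebra_simps)
  have c: "norm (of_real (n * (n - 1)) :: complex) \<le> n\<^sup>2"
    "norm (of_real (n * (n - 1) * (n - 2)) :: complex) \<le> n ^ 3"
    unfolding norm_of_real using n by (simp_all add: power2_eq_square power3_eq_cube mult_mono)
  have "norm (of_real n + e1) \<le> n + 6 * u"
    using norm_triangle_ineq[of "of_real n" e1] e n by simp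
  then show "norm (of_real n + e1) \<le> 2 * n"
    using u by linarith
  have "norm (2 * of_real n * e1) \<le> 12 * (n * u)"
    using mult_left_mono[OF e(1), of n] n by (simp add: norm_mult)
  then show "norm (of_real (n * (n - 1)) + 2 * of_real n * e1 + e2) \<le> 2 * n\<^sup>2"
    using norm_add3_le[of "of_real (n * (n - 1))" "2 * of_real n * e1" e2] c(1) e(2) nu
      zero_le_power2[of n] by linarith
  have "norm (3 * of_real (n * (n - 1)) * e1) = 3 * (norm (of_real (n * (n - 1)) :: complex) * norm e1)"
    by (simp only: norm_mult norm_numeral mult.assoc)
  also have "\<dots> \<le> 3 * (n\<^sup>2 * (6 * u))"
    using c(1) e(1) by (intro mult_left_mono mult_mono) auto
  finally have "norm (3 * of_real (n * (n - 1)) * e1) \<le> 18 * (n\<^sup>2 * u)"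
    by simp
  moreover have "norm (3 * of_real n * e2) \<le> 72 * (n * u\<^sup>2)"
    using mult_left_mono[OF e(2), of n] n by (simp add: norm_mult)
  ultimately show "norm (of_real (n * (n - 1) * (n - 2)) + 3 * of_real (n * (n - 1)) * e1
      + 3 * of_real n * e2 + e3) \<le> 2 * n ^ 3"
    using norm_add3_le[of "of_real (n * (n - 1) * (n - 2)) + 3 * of_real (n * (n - 1)) * e1" "3 * of_real n * e2" e3]
      norm_triangle_ineq[of "of_real (n * (n - 1) * (n - 2))" "3 * of_real (n * (n - 1)) * e1"]
      c(2) e(3) nnu n zero_le_power[of n 3] by linarith
qed

lemma norm_perturbed_leading_term_ge:
  fixes A B n u :: real and e1 e2 :: complex
  assumes n: "0 \<le> n" and u: "1 \<le> u" "100 * u \<le> n" "52 * (\<bar>A\<bar> + \<bar>B\<bar> + 1) * u \<le> \<bar>A + B\<bar> * n"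
    and e: "norm e1 \<le> 6 * u" "norm e2 \<le> 24 * u\<^sup>2"
  shows "\<bar>A + B\<bar> * n\<^sup>2 / 2
    \<le> norm (of_real B * (of_real (n * (n - 1)) + 2 * of_real n * e1 + e2) + of_real A * (of_real n + e1)\<^sup>2)"
proof -
  define E where "E = of_real B * (- of_real n + 2 * of_real n * e1 + e2) + of_real A * (2 * of_real n * e1 + e1\<^sup>2)"
  have split: "of_real B * (of_real (n * (n - 1)) + 2 * of_real n * e1 + e2) + of_real A * (of_real n + e1)\<^sup>2
      = of_real ((A + B) * n\<^sup>2) + E"
    by (simp add: E_def algebra_simps power2_eq_square)
  have ne1: "norm (2 * of_real n * e1) \<le> 12 * n * u" "norm (e1\<^sup>2) \<le> 36 * u\<^sup>2"
    using mult_left_mono[OF e(1) n] power_mono[OF e(1), of 2] n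
    by (simp_all add: norm_mult norm_power power_mult_distrib)
  have "norm (- of_real n + 2 * of_real n * e1 + e2) \<le> n + 12 * n * u + 24 * u\<^sup>2"
    using norm_add3_le[of "- of_real n" "2 * of_real n * e1" e2] ne1 e n by simp
  moreover have "norm (2 * of_real n * e1 + e1\<^sup>2) \<le> 12 * n * u + 36 * u\<^sup>2"
    using norm_triangle_ineq[of "2 * of_real n * e1" "e1\<^sup>2"] ne1 by simp
  moreover have "n \<le> n * u" "u\<^sup>2 \<le> n * u / 100"
    using mult_left_mono[OF u(1) n] mult_right_mono[OF u(2), of u] u by (simp_all add: power2_eq_square)
  ultimately have "norm (- of_real n + 2 * of_real n * e1 + e2) \<le> 26 * n * u"
    "norm (2 * of_real n * e1 + e1\<^sup>2) \<le> 26 * n * u"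
    using n by linarith+
  then have "norm E \<le> \<bar>B\<bar> * (26 * n * u) + \<bar>A\<bar> * (26 * n * u)"
    unfolding E_def using norm_triangle_ineq[of "of_real B * (- of_real n + 2 * of_real n * e1 + e2)"
      "of_real A * (2 * of_real n * e1 + e1\<^sup>2)"]
    by (smt (verit, best) abs_ge_zero mult_left_mono norm_mult norm_of_real)
  also have "\<dots> \<le> (\<bar>A\<bar> + \<bar>B\<bar> + 1) * u * 26 * n"
    using n u by (simp add: algebra_simps)
  also have "\<dots> \<le> \<bar>A + B\<bar> * n\<^sup>2 / 2"
    using mult_right_mono[OF u(3) n] by (simp add: power2_eq_square algebra_simps)
  finally have "norm E \<le> \<bar>A + B\<bar> * n\<^sup>2 / 2" .
  moreover have "norm (of_real ((A + B) * n\<^sup>2) :: complex) = \<bar>A + B\<bar> * n\<^sup>2"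
    unfolding norm_of_real by (simp add: abs_mult)
  ultimately show ?thesis
    unfolding split using norm_triangle_ineq2[of "of_real ((A + B) * n\<^sup>2)" "- E"] by simp
qed

lemma scaled_ode_norm_bound:
  fixes A B \<alpha> \<beta> \<gamma> \<delta> n r M :: real and f0 z0 X1 X2 X3 :: complex
  assumes ode: "f0 * z0 * (of_real B * X2 + of_real A * X1\<^sup>2)
      = X3 + of_real \<alpha> * z0 * X2 + of_real \<beta> * z0\<^sup>2 * X1 + of_real \<gamma> * z0 ^ 3 + of_real \<delta> * z0 ^ 3 / f0"
    and X: "norm X1 \<le> 2 * n" "norm X2 \<le> 2 * n\<^sup>2" "norm X3 \<le> 2 * n ^ 3"
    and lead: "\<bar>A + B\<bar> * n\<^sup>2 / 2 \<le> norm (of_real B * X2 + of_real A * X1\<^sup>2)"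
    and n: "1 \<le> n" and z0: "norm z0 = r" "1 \<le> r" and f0: "norm f0 = M" "1 \<le> M"
  shows "\<bar>A + B\<bar> * M \<le> 4 * n + 4 * (\<bar>\<alpha>\<bar> + \<bar>\<beta>\<bar> + \<bar>\<gamma>\<bar> + \<bar>\<delta>\<bar>) * r\<^sup>2"
proof -
  define P where "P = r * n\<^sup>2"
  have "n \<le> r * n\<^sup>2"
    using n z0 mult_mono[of 1 r n "n * n"] mult_left_mono[of 1 n n] by (simp add: power2_eq_square)
  then have squares: "1 \<le> n\<^sup>2" "1 \<le> r\<^sup>2" "n \<le> r * n\<^sup>2"
    using n z0 by (simp_all add: one_le_power)
  have P: "0 < P" "n ^ 3 \<le> n * P" "r * n\<^sup>2 \<le> r\<^sup>2 * P" "r\<^sup>2 * n \<le> r\<^sup>2 * P" "r ^ 3 \<le> r\<^sup>2 * P"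
    using n z0 squares mult_left_mono[OF z0(2), of "n ^ 3"] mult_right_mono[OF squares(2), of "r * n\<^sup>2"]
      mult_left_mono[OF squares(3), of "r\<^sup>2"] mult_left_mono[OF squares(1), of "r ^ 3"]
    by (simp_all add: P_def power2_eq_square power3_eq_cube algebra_simps)
  have "M * r * (\<bar>A + B\<bar> * n\<^sup>2 / 2) \<le> M * r * norm (of_real B * X2 + of_real A * X1\<^sup>2)"
    using lead f0 z0 by (intro mult_left_mono) auto
  also have "\<dots> = norm (f0 * z0 * (of_real B * X2 + of_real A * X1\<^sup>2))"
    using f0 z0 by (simp add: norm_mult)
  also have "\<dots> \<le> norm X3 + \<bar>\<alpha>\<bar> * r * norm X2 + \<bar>\<beta>\<bar> * r\<^sup>2 * norm X1 + \<bar>\<gamma>\<bar> * r ^ 3 + \<bar>\<delta>\<bar> * r ^ 3 / M"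
    unfolding ode using norm_triangle_mono norm_add3_le
    by (smt (verit) f0(1) norm_divide norm_mult norm_of_real norm_power norm_triangle_ineq z0(1))
  also have "\<dots> \<le> 2 * n * P + 2 * \<bar>\<alpha>\<bar> * r\<^sup>2 * P + 2 * \<bar>\<beta>\<bar> * r\<^sup>2 * P + \<bar>\<gamma>\<bar> * r\<^sup>2 * P + \<bar>\<delta>\<bar> * r\<^sup>2 * P"
  proof (intro add_mono)
    show "norm X3 \<le> 2 * n * P"
      using X(3) P(2) by simp
    show "\<bar>\<alpha>\<bar> * r * norm X2 \<le> 2 * \<bar>\<alpha>\<bar> * r\<^sup>2 * P"
      using mult_left_mono[OF X(2), of "\<bar>\<alpha>\<bar> * r"] mult_left_mono[OF P(3), of "2 * \<bar>\<alpha>\<bar>"] z0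
      by (simp add: P_def algebra_simps)
    show "\<bar>\<beta>\<bar> * r\<^sup>2 * norm X1 \<le> 2 * \<bar>\<beta>\<bar> * r\<^sup>2 * P"
      using mult_left_mono[OF X(1), of "\<bar>\<beta>\<bar> * r\<^sup>2"] mult_left_mono[OF P(4), of "2 * \<bar>\<beta>\<bar>"]
      by (simp add: algebra_simps)
    show "\<bar>\<gamma>\<bar> * r ^ 3 \<le> \<bar>\<gamma>\<bar> * r\<^sup>2 * P"
      using mult_left_mono[OF P(5), of "\<bar>\<gamma>\<bar>"] by (simp add: algebra_simps)
    have "\<bar>\<delta>\<bar> * r ^ 3 / M \<le> \<bar>\<delta>\<bar> * r ^ 3"
      using divide_left_mono[of 1 M "\<bar>\<delta>\<bar> * r ^ 3"] f0 z0 by simp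
    then show "\<bar>\<delta>\<bar> * r ^ 3 / M \<le> \<bar>\<delta>\<bar> * r\<^sup>2 * P"
      using mult_left_mono[OF P(5), of "\<bar>\<delta>\<bar>"] by (simp add: algebra_simps)
  qed
  also have "\<dots> \<le> (4 * n + 4 * (\<bar>\<alpha>\<bar> + \<bar>\<beta>\<bar> + \<bar>\<gamma>\<bar> + \<bar>\<delta>\<bar>) * r\<^sup>2) * (P / 2)"
    using P(1) by (simp add: algebra_simps)
  finally have "(\<bar>A + B\<bar> * M) * (P / 2) \<le> (4 * n + 4 * (\<bar>\<alpha>\<bar> + \<bar>\<beta>\<bar> + \<bar>\<gamma>\<bar> + \<bar>\<delta>\<bar>) * r\<^sup>2) * (P / 2)"
    by (simp add: P_def algebra_simps)
  then show ?thesis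
    using P(1) by (simp only: mult_le_cancel_right_pos half_gt_zero)
qed

lemma ode_rescaled_at_point:
  fixes A B \<alpha> \<beta> \<gamma> \<delta> :: real and f0 z0 X1 X2 X3 :: complex
  assumes ode: "f0 / z0 ^ 3 * X3 - of_real B * f0 * (f0 / z0\<^sup>2 * X2) - of_real A * (f0 / z0 * X1)\<^sup>2
      + of_real \<alpha> * (f0 / z0\<^sup>2 * X2) + of_real \<beta> * (f0 / z0 * X1) + of_real \<gamma> * f0 + of_real \<delta> = 0"
    and z0: "z0 \<noteq> 0" and f0: "f0 \<noteq> 0"
  shows "f0 * z0 * (of_real B * X2 + of_real A * X1\<^sup>2)
    = X3 + of_real \<alpha> * z0 * X2 + of_real \<beta> * z0\<^sup>2 * X1 + of_real \<gamma> * z0 ^ 3 + of_real \<delta> * z0 ^ 3 / f0"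
proof -
  have "X3 + of_real \<alpha> * z0 * X2 + of_real \<beta> * z0\<^sup>2 * X1 + of_real \<gamma> * z0 ^ 3 + of_real \<delta> * z0 ^ 3 / f0
      - f0 * z0 * (of_real B * X2 + of_real A * X1\<^sup>2)
    = z0 ^ 3 / f0 * (f0 / z0 ^ 3 * X3 - of_real B * f0 * (f0 / z0\<^sup>2 * X2) - of_real A * (f0 / z0 * X1)\<^sup>2
      + of_real \<alpha> * (f0 / z0\<^sup>2 * X2) + of_real \<beta> * (f0 / z0 * X1) + of_real \<gamma> * f0 + of_real \<delta>)"
    using z0 f0 by (simp add: field_simps power2_eq_square power3_eq_cube)
  then show ?thesis
    using ode by simp
qed

lemma derivs_near_max_point:
  fixes f :: "complex \<Rightarrow> complex" and m :: nat
  assumes f: "f holomorphic_on UNIV" and z0: "norm z0 = r" and r: "0 < r"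
    and \<rho>: "0 < \<rho>" "\<rho> \<le> 1 / 2" and f0: "f z0 \<noteq> 0"
    and bound: "\<And>x. norm (x - z0) = r * \<rho> \<Longrightarrow>
      norm (f x) / norm x ^ (m + 3) \<le> 3 * norm (f z0) / r ^ (m + 3)"
  defines "n \<equiv> real (m + 3)"
  obtains e1 e2 e3 :: complex
  where "norm e1 \<le> 3 / \<rho>" "norm e2 \<le> 6 / \<rho>\<^sup>2" "norm e3 \<le> 18 / \<rho> ^ 3"
    and "deriv f z0 = f z0 / z0 * (of_real n + e1)"
    and "(deriv ^^ 2) f z0 = f z0 / z0\<^sup>2 * (of_real (n * (n - 1)) + 2 * of_real n * e1 + e2)"
    and "(deriv ^^ 3) f z0 = f z0 / z0 ^ 3 * (of_real (n * (n - 1) * (n - 2))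
      + 3 * of_real (n * (n - 1)) * e1 + 3 * of_real n * e2 + e3)"
proof -
  define H where "H = (\<lambda>w. f w / w ^ (m + 3))"
  define e where "e j = z0 ^ j * (deriv ^^ j) H z0 / H z0" for j
  have z0_nonzero: "z0 \<noteq> 0"
    using z0 r by auto
  have H0: "H z0 \<noteq> 0"
    using f0 z0_nonzero by (simp add: H_def)
  have f_eq: "f z0 = z0 ^ (m + 3) * H z0"
    using z0_nonzero by (simp add: H_def)
  have e_bound: "norm (e j) \<le> 3 * fact j / \<rho> ^ j" for j
    unfolding e_def H_def by (rule norm_higher_deriv_power_quotient_le[OF f z0 r \<rho> f0 bound])
  have n: "(of_nat (m + 3) :: complex) = of_real n" "(of_nat (m + 2) :: complex) = of_real (n - 1)"
    "(of_nat (m + 1) :: complex) = of_real (n - 2)"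
    by (simp_all add: n_def)
  note d = higher_derivs_power_mult[OF f z0_nonzero, of m, folded H_def, unfolded n]
  have D: "deriv H z0 = H z0 * e 1 / z0" "(deriv ^^ 2) H z0 = H z0 * e 2 / z0\<^sup>2"
    "(deriv ^^ 3) H z0 = H z0 * e 3 / z0 ^ 3"
    using H0 z0_nonzero by (simp_all add: e_def)
  have "norm (e 1) \<le> 3 / \<rho>" "norm (e 2) \<le> 6 / \<rho>\<^sup>2" "norm (e 3) \<le> 18 / \<rho> ^ 3"
    using e_bound[of 1] e_bound[of 2] e_bound[of 3] by (simp_all add: fact_numeral)
  moreover have "deriv f z0 = f z0 / z0 * (of_real n + e 1)"
    "(deriv ^^ 2) f z0 = f z0 / z0\<^sup>2 * (of_real (n * (n - 1)) + 2 * of_real n * e 1 + e 2)"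
    "(deriv ^^ 3) f z0 = f z0 / z0 ^ 3 * (of_real (n * (n - 1) * (n - 2))
      + 3 * of_real (n * (n - 1)) * e 1 + 3 * of_real n * e 2 + e 3)"
    unfolding d D f_eq using z0_nonzero
    by (simp_all add: field_simps power_add power2_eq_square power3_eq_cube)
  ultimately show ?thesis
    using that by blast
qed

lemma regular_point_error_scale:
  fixes A B R n \<rho> :: real
  assumes R: "100 \<le> R" "52 * (\<bar>A\<bar> + \<bar>B\<bar> + 1) \<le> \<bar>A + B\<bar> * R"
    and \<rho>: "0 < \<rho>" and n: "R \<le> n" "R \<le> 2 * n * \<rho>"
  defines "u \<equiv> n / R"
  shows "1 \<le> u" "100 * u \<le> n" "52 * (\<bar>A\<bar> + \<bar>B\<bar> + 1) * u \<le> \<bar>A + B\<bar> * n"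
    and "3 / \<rho> \<le> 6 * u" "6 / \<rho>\<^sup>2 \<le> 24 * u\<^sup>2" "18 / \<rho> ^ 3 \<le> 144 * u ^ 3"
proof -
  have R0: "0 < R"
    using R by simp
  show u: "1 \<le> u" "100 * u \<le> n"
    using n R0 R(1) mult_left_mono[OF R(1), of n] by (simp_all add: u_def field_simps)
  have "52 * (\<bar>A\<bar> + \<bar>B\<bar> + 1) * u \<le> \<bar>A + B\<bar> * R * u"
    using R(2) u by (intro mult_right_mono) auto
  then show "52 * (\<bar>A\<bar> + \<bar>B\<bar> + 1) * u \<le> \<bar>A + B\<bar> * n"
    using R0 by (simp add: u_def)
  have "1 / \<rho> \<le> 2 * u"
    using \<rho> R0 n(2) by (simp add: u_def field_simps)
  then show "3 / \<rho> \<le> 6 * u" "6 / \<rho>\<^sup>2 \<le> 24 * u\<^sup>2" "18 / \<rho> ^ 3 \<le> 144 * u ^ 3"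
    using power_mono[of "1 / \<rho>" "2 * u" 2] power_mono[of "1 / \<rho>" "2 * u" 3] \<rho>
    by (simp_all add: power_divide power_mult_distrib)
qed

lemma ode_solution_bound_at_regular_point:
  fixes f :: "complex \<Rightarrow> complex" and A B \<alpha> \<beta> \<gamma> \<delta> R r \<rho> :: real and N :: nat
  assumes f: "f holomorphic_on UNIV"
    and ode: "\<And>z. (deriv ^^ 3) f z - of_real B * f z * (deriv ^^ 2) f z
                 - of_real A * (deriv f z)\<^sup>2 + of_real \<alpha> * (deriv ^^ 2) f z
                 + of_real \<beta> * deriv f z + of_real \<gamma> * f z + of_real \<delta> = 0"
    and R: "100 \<le> R" "52 * (\<bar>A\<bar> + \<bar>B\<bar> + 1) \<le> \<bar>A + B\<bar> * R"
    and z0: "norm z0 = r" "1 \<le> r" and f0: "1 \<le> norm (f z0)"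
    and \<rho>: "0 < \<rho>" "\<rho> \<le> 1 / 2" "R \<le> 2 * real N * \<rho>"
    and bound: "\<And>x. norm (x - z0) = r * \<rho> \<Longrightarrow> norm (f x) / norm x ^ N \<le> 3 * norm (f z0) / r ^ N"
  shows "\<bar>A + B\<bar> * norm (f z0) \<le> 4 * N + 4 * (\<bar>\<alpha>\<bar> + \<bar>\<beta>\<bar> + \<bar>\<gamma>\<bar> + \<bar>\<delta>\<bar>) * r\<^sup>2"
proof -
  have "R \<le> N"
    using \<rho> mult_left_mono[of "2 * \<rho>" 1 "real N"] by simp
  then have "3 \<le> N"
    using R by linarith
  then obtain m where m: "N = m + 3"
    using le_Suc_ex[of 3 N] by (auto simp: add.commute)
  define n where "n = real (m + 3)"
  have n: "2 \<le> n"
    using R \<open>R \<le> N\<close> by (simp add: n_def m)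
  obtain u where u: "1 \<le> u" "100 * u \<le> n" and u_small: "52 * (\<bar>A\<bar> + \<bar>B\<bar> + 1) * u \<le> \<bar>A + B\<bar> * n"
    and e_scale: "3 / \<rho> \<le> 6 * u" "6 / \<rho>\<^sup>2 \<le> 24 * u\<^sup>2" "18 / \<rho> ^ 3 \<le> 144 * u ^ 3"
    using regular_point_error_scale[OF R \<rho>(1), of n] \<open>R \<le> N\<close> \<rho>(3) by (simp add: n_def m)
  have f0_nonzero: "f z0 \<noteq> 0" and z0_nonzero: "z0 \<noteq> 0"
    using f0 z0 by auto
  obtain e1 e2 e3 where e: "norm e1 \<le> 3 / \<rho>" "norm e2 \<le> 6 / \<rho>\<^sup>2" "norm e3 \<le> 18 / \<rho> ^ 3"
    and d1: "deriv f z0 = f z0 / z0 * (of_real n + e1)"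
    and d2: "(deriv ^^ 2) f z0 = f z0 / z0\<^sup>2 * (of_real (n * (n - 1)) + 2 * of_real n * e1 + e2)"
    and d3: "(deriv ^^ 3) f z0 = f z0 / z0 ^ 3 * (of_real (n * (n - 1) * (n - 2))
      + 3 * of_real (n * (n - 1)) * e1 + 3 * of_real n * e2 + e3)"
    using derivs_near_max_point[OF f z0(1) _ \<rho>(1,2) f0_nonzero, of m] bound z0 unfolding m n_def by auto
  note e' = order.trans[OF e(1) e_scale(1)] order.trans[OF e(2) e_scale(2)] order.trans[OF e(3) e_scale(3)]
  define X1 where "X1 = of_real n + e1"
  define X2 where "X2 = of_real (n * (n - 1)) + 2 * of_real n * e1 + e2"
  define X3 where "X3 = of_real (n * (n - 1) * (n - 2)) + 3 * of_real (n * (n - 1)) * e1 + 3 * of_real n * e2 + e3"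
  have scaled: "f z0 * z0 * (of_real B * X2 + of_real A * X1\<^sup>2)
      = X3 + of_real \<alpha> * z0 * X2 + of_real \<beta> * z0\<^sup>2 * X1 + of_real \<gamma> * z0 ^ 3 + of_real \<delta> * z0 ^ 3 / f z0"
    using ode[of z0] z0_nonzero f0_nonzero unfolding d1 d2 d3 X1_def[symmetric] X2_def[symmetric] X3_def[symmetric]
    by (rule ode_rescaled_at_point)
  have "\<bar>A + B\<bar> * norm (f z0) \<le> 4 * n + 4 * (\<bar>\<alpha>\<bar> + \<bar>\<beta>\<bar> + \<bar>\<gamma>\<bar> + \<bar>\<delta>\<bar>) * r\<^sup>2"
  proof (rule scaled_ode_norm_bound[OF scaled])
    show "norm X1 \<le> 2 * n" "norm X2 \<le> 2 * n\<^sup>2" "norm X3 \<le> 2 * n ^ 3"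
      unfolding X1_def X2_def X3_def using norm_perturbed_falling_factorials_le[OF n(1) _ u(2) e'] u
      by simp_all
    show "\<bar>A + B\<bar> * n\<^sup>2 / 2 \<le> norm (of_real B * X2 + of_real A * X1\<^sup>2)"
      unfolding X1_def X2_def using norm_perturbed_leading_term_ge[OF _ u u_small e'(1,2)] n by simp
  qed (use n z0 f0 in auto)
  then show ?thesis
    by (simp add: n_def m)
qed

lemma square_le_of_quadratic_inequality:
  fixes \<kappa> R \<Gamma> x r :: real
  assumes \<kappa>: "0 < \<kappa>" and \<Gamma>: "0 \<le> \<Gamma>" and x: "0 \<le> x" and r: "1 \<le> r"
    and ineq: "\<kappa> * x\<^sup>2 \<le> 4 * R * x + 4 + 4 * \<Gamma> * r\<^sup>2"
  shows "x\<^sup>2 \<le> ((8 + 8 * \<Gamma>) / \<kappa> + 64 * R\<^sup>2 / \<kappa>\<^sup>2) * r\<^sup>2"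
proof -
  have r2: "1 \<le> r\<^sup>2"
    using r by (simp add: one_le_power)
  have nonneg: "0 \<le> (8 + 8 * \<Gamma>) / \<kappa>" "0 \<le> 64 * R\<^sup>2 / \<kappa>\<^sup>2"
    using \<kappa> \<Gamma> by simp_all
  show ?thesis
  proof (cases "8 * R \<le> \<kappa> * x")
    case True
    then have "8 * R * x \<le> \<kappa> * x\<^sup>2"
      using mult_right_mono[OF True x] by (simp add: power2_eq_square mult.assoc)
    then have "\<kappa> * x\<^sup>2 \<le> (8 + 8 * \<Gamma>) * r\<^sup>2"
      using ineq r2 mult_left_mono[OF r2 \<Gamma>] by (simp add: algebra_simps)
    then have "x\<^sup>2 \<le> (8 + 8 * \<Gamma>) / \<kappa> * r\<^sup>2"
      using \<kappa> by (simp add: field_simps)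
    also have "\<dots> \<le> ((8 + 8 * \<Gamma>) / \<kappa> + 64 * R\<^sup>2 / \<kappa>\<^sup>2) * r\<^sup>2"
      using nonneg r2 by (intro mult_right_mono) auto
    finally show ?thesis .
  next
    case False
    then have "x\<^sup>2 \<le> (8 * R / \<kappa>)\<^sup>2"
      using \<kappa> x by (intro power_mono) (auto simp: field_simps)
    also have "\<dots> \<le> ((8 + 8 * \<Gamma>) / \<kappa> + 64 * R\<^sup>2 / \<kappa>\<^sup>2) * 1"
      using nonneg by (simp add: power_divide power_mult_distrib)
    also have "\<dots> \<le> ((8 + 8 * \<Gamma>) / \<kappa> + 64 * R\<^sup>2 / \<kappa>\<^sup>2) * r\<^sup>2"
      using nonneg r2 by (intro mult_left_mono) auto
    finally show ?thesis .
  qed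
qed

lemma ode_solution_max_modulus_le_at_regular_radius:
  fixes f :: "complex \<Rightarrow> complex" and A B \<alpha> \<beta> \<gamma> \<delta> R s0 \<rho> :: real and N :: nat
  assumes f: "f holomorphic_on UNIV" and np: "\<nexists>p. \<forall>z. f z = poly p z"
    and ode: "\<And>z. (deriv ^^ 3) f z - of_real B * f z * (deriv ^^ 2) f z
                 - of_real A * (deriv f z)\<^sup>2 + of_real \<alpha> * (deriv ^^ 2) f z
                 + of_real \<beta> * deriv f z + of_real \<gamma> * f z + of_real \<delta> = 0"
    and R: "100 \<le> R" "52 * (\<bar>A\<bar> + \<bar>B\<bar> + 1) \<le> \<bar>A + B\<bar> * R"
    and s0: "0 \<le> s0" "0 \<le> log_max_modulus f s0"
    and \<rho>: "0 < \<rho>" "\<rho> \<le> 1 / 2" "R \<le> 2 * real N * \<rho>"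
    and N: "real N \<le> R * exp (log_max_modulus f s0 / 2) + 1"
    and local: "\<And>t. - 2 * \<rho> \<le> t \<Longrightarrow> t \<le> \<rho> \<Longrightarrow>
      log_max_modulus f (s0 + t) \<le> log_max_modulus f s0 + real N * t + 1"
  defines "\<kappa> \<equiv> \<bar>A + B\<bar>" and "\<Gamma> \<equiv> \<bar>\<alpha>\<bar> + \<bar>\<beta>\<bar> + \<bar>\<gamma>\<bar> + \<bar>\<delta>\<bar>"
  shows "max_modulus f (exp s0) \<le> ((8 + 8 * \<Gamma>) / \<kappa> + 64 * R\<^sup>2 / \<kappa>\<^sup>2) * (exp s0)\<^sup>2"
proof -
  define r where "r = exp s0"
  define M where "M = max_modulus f r"
  have M_exp: "max_modulus f (exp s) = exp (log_max_modulus f s)" for s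
    by (simp add: exp_log_max_modulus[OF f np])
  have r: "1 \<le> r" "0 < r" and M1: "1 \<le> M"
    using s0 M_exp[of s0] by (simp_all add: r_def M_def)
  have \<kappa>: "0 < \<kappa>"
    using R by (auto simp: \<kappa>_def)
  obtain z0 where z0: "norm z0 = r" "norm (f z0) = M"
    using max_modulus_attained[OF holomorphic_on_imp_continuous_on[OF f], of r] r by (auto simp: M_def)
  have "max_modulus f (r * exp t) \<le> exp 1 * M * exp t ^ N" if "- 2 * \<rho> \<le> t" "t \<le> \<rho>" for t
    using local[OF that] M_exp[of s0] M_exp[of "s0 + t"]
    by (simp add: r_def M_def exp_add[symmetric] exp_of_nat_mult[symmetric] mult.commute)
  from norm_over_power_le_near_max_point[OF holomorphic_on_imp_continuous_on[OF f] z0(1) r(2) \<rho>(1,2) this[unfolded M_def]]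
  have "\<kappa> * M \<le> 4 * N + 4 * \<Gamma> * r\<^sup>2"
    using ode_solution_bound_at_regular_point[OF f ode R z0(1) r(1) _ \<rho>] z0 M1
    by (simp add: \<kappa>_def \<Gamma>_def M_def)
  moreover have "exp (log_max_modulus f s0 / 2) = sqrt M"
    using real_sqrt_unique[of "exp (log_max_modulus f s0 / 2)" "exp (log_max_modulus f s0)"] M_exp[of s0]
    by (simp add: M_def r_def power2_eq_square flip: exp_add)
  ultimately have "\<kappa> * (sqrt M)\<^sup>2 \<le> 4 * R * sqrt M + 4 + 4 * \<Gamma> * r\<^sup>2"
    using N M1 by simp
  from square_le_of_quadratic_inequality[OF \<kappa> _ _ r(1) this] show ?thesis
    using M1 by (simp add: \<Gamma>_def M_def r_def)
qed

lemma ode_solution_max_modulus_quadratic_growth: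
  fixes f :: "complex \<Rightarrow> complex" and A B \<alpha> \<beta> \<gamma> \<delta> :: real
  assumes f: "f holomorphic_on UNIV" and np: "\<nexists>p. \<forall>z. f z = poly p z" and AB: "A + B \<noteq> 0"
    and ode: "\<And>z. (deriv ^^ 3) f z - of_real B * f z * (deriv ^^ 2) f z
                 - of_real A * (deriv f z)\<^sup>2 + of_real \<alpha> * (deriv ^^ 2) f z
                 + of_real \<beta> * deriv f z + of_real \<gamma> * f z + of_real \<delta> = 0"
  shows "\<exists>C. \<forall>S. \<exists>r\<ge>S. 0 < r \<and> max_modulus f r \<le> C * r\<^sup>2"
proof -
  define R where "R = max 100 (52 * (\<bar>A\<bar> + \<bar>B\<bar> + 1) / \<bar>A + B\<bar>)"
  have "52 * (\<bar>A\<bar> + \<bar>B\<bar> + 1) / \<bar>A + B\<bar> \<le> R"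
    by (simp add: R_def)
  then have R: "100 \<le> R" "52 * (\<bar>A\<bar> + \<bar>B\<bar> + 1) \<le> \<bar>A + B\<bar> * R"
    using AB by (simp add: R_def, simp add: pos_divide_le_eq mult.commute)
  have R2: "2 \<le> R"
    using R by simp
  note bound = ode_solution_max_modulus_le_at_regular_radius[OF f np ode R]
  have "\<exists>r\<ge>S. 0 < r \<and> max_modulus f r \<le> C * r\<^sup>2"
    if "C = (8 + 8 * (\<bar>\<alpha>\<bar> + \<bar>\<beta>\<bar> + \<bar>\<gamma>\<bar> + \<bar>\<delta>\<bar>)) / \<bar>A + B\<bar> + 64 * R\<^sup>2 / \<bar>A + B\<bar>\<^sup>2" for C S
  proof (rule convex_superlinear_integer_slope_point[OF convex_log_max_modulus[OF f np]
        mono_log_max_modulus[OF f np] R2 log_max_modulus_superlinear[OF f np], where S = "max S 0"])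
    fix s0 \<rho> :: real and N :: nat
    assume "max S 0 \<le> s0" and regular: "0 \<le> log_max_modulus f s0" "0 < \<rho>" "\<rho> \<le> 1 / 2"
      "R \<le> 2 * real N * \<rho>" "real N \<le> R * exp (log_max_modulus f s0 / 2) + 1"
      "\<And>t. - 2 * \<rho> \<le> t \<Longrightarrow> t \<le> \<rho> \<Longrightarrow>
        log_max_modulus f (s0 + t) \<le> log_max_modulus f s0 + real N * t + 1"
    moreover have "s0 \<le> exp s0"
      using exp_ge_add_one_self[of s0] by linarith
    ultimately show ?thesis
      using bound[OF _ regular] that by (intro exI[of _ "exp s0"]) auto
  qed
  then show ?thesis
    by blast
qed

theorem corollary2:
  fixes A B \<alpha> \<beta> \<gamma> \<delta> :: real
  assumes "A + B \<noteq> 0"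
  shows "\<not> (\<exists>u. transcendental_entire u \<and>
           (\<forall>z. (deriv ^^ 3) u z - of_real B * u z * (deriv ^^ 2) u z
                 - of_real A * (deriv u z)\<^sup>2 + of_real \<alpha> * (deriv ^^ 2) u z
                 + of_real \<beta> * deriv u z + of_real \<gamma> * u z + of_real \<delta> = 0))"
proof
  assume "\<exists>u. transcendental_entire u \<and>
           (\<forall>z. (deriv ^^ 3) u z - of_real B * u z * (deriv ^^ 2) u z
                 - of_real A * (deriv u z)\<^sup>2 + of_real \<alpha> * (deriv ^^ 2) u z
                 + of_real \<beta> * deriv u z + of_real \<gamma> * u z + of_real \<delta> = 0)"
  then obtain u where u: "u holomorphic_on UNIV" "\<nexists>p. \<forall>z. u z = poly p z"
    and ode: "\<And>z. (deriv ^^ 3) u z - of_real B * u z * (deriv ^^ 2) u z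
                 - of_real A * (deriv u z)\<^sup>2 + of_real \<alpha> * (deriv ^^ 2) u z
                 + of_real \<beta> * deriv u z + of_real \<gamma> * u z + of_real \<delta> = 0"
    by (auto simp: transcendental_entire_def)
  obtain C where "\<forall>S. \<exists>r\<ge>S. 0 < r \<and> max_modulus u r \<le> C * r\<^sup>2"
    using ode_solution_max_modulus_quadratic_growth[OF u assms ode] by blast
  then show False
    using entire_poly_if_max_modulus_growth[OF u(1)] u(2) by blast
qed

end
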